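(* In $D_n$: (1) $w_L\cdot s_1=s_{1'}\cdot w_L$ for $2\le L\le n-1$; (2) $w_L\cdot s_{1'}=s_1\cdot w_L$ for $2\le L\le n-1$; (3) $w_L\cdot s_k=s_k\cdot w_L$ whenever $2\le k\le L-1$ and $L\le n-1$.
   Context: $D_n$ ($n\ge2$) is the Coxeter group with generators $s_{1'},s_1,\dots,s_{n-1}$ and relations $s^2=1$, $(s_i s_{i+1})^3=1$, $(s_is_j)^2=1$ for $|i-j|\ge 2$, $(s_{1'}s_2)^3=1$, $(s_{1'}s_i)^2=1$ for $i\ne 2$. $w_L=s_L s_{L-1}\cdots s_2 s_1 s_{1'} s_2\cdots s_L$ for $1\le L\le n-1$. *)

theory Defs
  imports Main
begin

text \<open>Generators of the Coxeter group D_n: S' is s_{1'}, S i is s_i (1 <= i <= n-1).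
  Elements of D_n are represented by words (lists of generators); two words represent the
  same element iff they are related by the congruence generated by the Coxeter relators.
  Since all generators are involutions, the monoid presentation below presents the group.\<close>

datatype gen = S' | S nat

type_synonym word = "gen list"

definition valid_gen :: "nat \<Rightarrow> gen \<Rightarrow> bool" where
  "valid_gen n g = (case g of S' \<Rightarrow> True | S i \<Rightarrow> 1 \<le> i \<and> i \<le> n - 1)"

fun cox_m :: "gen \<Rightarrow> gen \<Rightarrow> nat" where
  "cox_m S' S' = 1"
| "cox_m S' (S i) = (if i = 2 then 3 else 2)"
| "cox_m (S i) S' = (if i = 2 then 3 else 2)"
| "cox_m (S i) (S j) = (if i = j then 1 else if i = j + 1 \<or> j = i + 1 then 3 else 2)"

definition relator :: "nat \<Rightarrow> word \<Rightarrow> bool" where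
  "relator n r \<longleftrightarrow> (\<exists>s t. valid_gen n s \<and> valid_gen n t \<and>
      r = concat (replicate (cox_m s t) [s, t]))"

inductive D_eq :: "nat \<Rightarrow> word \<Rightarrow> word \<Rightarrow> bool" for n where
  D_refl: "D_eq n u u"
| D_sym: "D_eq n u v \<Longrightarrow> D_eq n v u"
| D_trans: "D_eq n u v \<Longrightarrow> D_eq n v w \<Longrightarrow> D_eq n u w"
| D_rel: "relator n r \<Longrightarrow> D_eq n (u @ r @ v) (u @ v)"

definition wL :: "nat \<Rightarrow> word" where
  "wL L = map S (rev [2..<L+1]) @ [S 1, S'] @ map S [2..<L+1]"

end

theory Submission
  imports Defs
begin

(* Since w_(L+1) = s_(L+1) w_L s_(L+1), an intertwining relation w_L a = b w_L propagates
   from L to L + 1 as soon as s_(L+1) commutes with a and b. Starting from w_2 = s_2 s_1 s_1' s_2,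
   where the relations are checked by hand from the braid relations, this gives (1) and (2);
   for (3) the induction starts at L = k + 1, where w_(k+1) s_k = s_k w_(k+1) follows from the
   braid relation between s_k and s_(k+1), because w_(k-1) commutes with s_(k+1). *)

lemma D_eq_trans_calc [trans]: "D_eq n u v \<Longrightarrow> D_eq n v w \<Longrightarrow> D_eq n u w"
  by (rule D_trans)

lemma D_eq_append_cong: "D_eq n u v \<Longrightarrow> D_eq n (a @ u @ b) (a @ v @ b)"
proof (induction rule: D_eq.induct)
  case (D_refl u)
  then show ?case by (rule D_eq.D_refl)
next
  case (D_sym u v)
  from D_sym.IH show ?case by (rule D_eq.D_sym)
next
  case (D_trans u v w)
  from D_trans.IH show ?case by (rule D_eq.D_trans)
next
  case (D_rel r u v)
  then have "D_eq n ((a @ u) @ r @ (v @ b)) ((a @ u) @ (v @ b))" by (rule D_eq.D_rel)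
  then show ?case by simp
qed

lemma cox_m_commute: "cox_m s t = cox_m t s"
  by (cases s; cases t) auto

lemma D_eq_relator_cox:
  assumes "valid_gen n s" "valid_gen n t"
  shows "D_eq n (u @ concat (replicate (cox_m s t) [s, t]) @ v) (u @ v)"
  using assms by (intro D_rel) (auto simp: relator_def)

lemma D_eq_insert_square:
  assumes "valid_gen n s"
  shows "D_eq n (u @ v) (u @ [s, s] @ v)"
proof -
  have "cox_m s s = 1" by (cases s) auto
  then have "D_eq n (u @ [s, s] @ v) (u @ v)" using D_eq_relator_cox[OF assms assms, of u v] by simp
  then show ?thesis by (rule D_sym)
qed

lemma D_eq_commute:
  assumes "valid_gen n s" "valid_gen n t" "cox_m s t = 2"
  shows "D_eq n [s, t] [t, s]"
proof -
  have rel: "D_eq n ([t] @ [t, s, t, s] @ [s]) ([t] @ [s])"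
    using D_eq_relator_cox[OF assms(2,1), of "[t]" "[s]"] assms(3)
    by (simp add: cox_m_commute numeral_2_eq_2)
  have "D_eq n [s, t] [s, t, s, s]"
    using D_eq_insert_square[OF assms(1), of "[s, t]" "[]"] by simp
  also have "D_eq n \<dots> [t, t, s, t, s, s]"
    using D_eq_insert_square[OF assms(2), of "[]" "[s, t, s, s]"] by simp
  also have "D_eq n \<dots> [t, s]" using rel by simp
  finally show ?thesis .
qed

lemma D_eq_braid:
  assumes "valid_gen n s" "valid_gen n t" "cox_m s t = 3"
  shows "D_eq n [s, t, s] [t, s, t]"
proof -
  have rel: "D_eq n ([] @ [s, t, s, t, s, t] @ [t, s, t]) ([] @ [t, s, t])"
    using D_eq_relator_cox[OF assms(1,2), of "[]" "[t, s, t]"] assms(3)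
    by (simp add: numeral_3_eq_3)
  have "D_eq n [s, t, s] [s, t, s, t, t]"
    using D_eq_insert_square[OF assms(2), of "[s, t, s]" "[]"] by simp
  also have "D_eq n \<dots> [s, t, s, t, s, s, t]"
    using D_eq_insert_square[OF assms(1), of "[s, t, s, t]" "[t]"] by simp
  also have "D_eq n \<dots> [s, t, s, t, s, t, t, s, t]"
    using D_eq_insert_square[OF assms(2), of "[s, t, s, t, s]" "[s, t]"] by simp
  also have "D_eq n \<dots> [t, s, t]" using rel by simp
  finally show ?thesis .
qed

lemma D_eq_commute_word:
  assumes "\<forall>x \<in> set X. D_eq n ([x] @ u) (u @ [x])"
  shows "D_eq n (X @ u) (u @ X)"
  using assms
proof (induction X)
  case Nil
  then show ?case by (simp add: D_refl)
next
  case (Cons x X)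
  have "D_eq n ([x] @ (X @ u) @ []) ([x] @ (u @ X) @ [])"
    using Cons by (intro D_eq_append_cong) simp
  also have "D_eq n \<dots> ([] @ ([x] @ u) @ X)" by (simp add: D_refl)
  also have "D_eq n \<dots> ([] @ (u @ [x]) @ X)" using Cons.prems by (intro D_eq_append_cong) simp
  finally show ?case by simp
qed

lemma D_eq_conjugate_intertwine:
  assumes "D_eq n (w @ u) (v @ w)" "D_eq n (x @ u) (u @ x)" "D_eq n (v @ x) (x @ v)"
  shows "D_eq n ((x @ w @ x) @ u) (v @ x @ w @ x)"
proof -
  have "D_eq n ((x @ w) @ (x @ u) @ []) ((x @ w) @ (u @ x) @ [])"
    using assms(2) by (rule D_eq_append_cong)
  also have "D_eq n \<dots> (x @ (w @ u) @ x)" by (simp add: D_refl)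
  also have "D_eq n \<dots> (x @ (v @ w) @ x)" using assms(1) by (rule D_eq_append_cong)
  also have "D_eq n \<dots> ([] @ (x @ v) @ (w @ x))" by (simp add: D_refl)
  also have "D_eq n \<dots> ([] @ (v @ x) @ (w @ x))" using D_sym[OF assms(3)] by (rule D_eq_append_cong)
  finally show ?thesis by simp
qed

lemma D_eq_braid_conjugate_commute:
  assumes "valid_gen n s" "valid_gen n t" "cox_m s t = 3" "D_eq n (X @ [t]) ([t] @ X)"
  shows "D_eq n ([t, s] @ X @ [s, t] @ [s]) ([s] @ [t, s] @ X @ [s, t])"
proof -
  have braid_ts: "D_eq n [t, s, t] [s, t, s]"
    using assms(3) by (intro D_eq_braid assms(1,2)) (simp add: cox_m_commute)
  have "D_eq n (([t, s] @ X) @ [s, t, s] @ []) (([t, s] @ X) @ [t, s, t] @ [])"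
    using D_eq_braid[OF assms(1-3)] by (rule D_eq_append_cong)
  also have "D_eq n \<dots> ([t, s] @ (X @ [t]) @ [s, t])" by (simp add: D_refl)
  also have "D_eq n \<dots> ([t, s] @ ([t] @ X) @ [s, t])" using assms(4) by (rule D_eq_append_cong)
  also have "D_eq n \<dots> ([] @ [t, s, t] @ (X @ [s, t]))" by (simp add: D_refl)
  also have "D_eq n \<dots> ([] @ [s, t, s] @ (X @ [s, t]))" using braid_ts by (rule D_eq_append_cong)
  finally show ?thesis by simp
qed

lemma D_eq_intertwine_commuting_pair:
  assumes "valid_gen n a" "valid_gen n b" "valid_gen n c"
    and "cox_m a b = 2" "cox_m a c = 3" "cox_m b c = 3"
  shows "D_eq n ([c, a, b, c] @ [a]) ([b] @ [c, a, b, c])"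
proof -
  have "cox_m b a = 2" "cox_m c b = 3"
    using assms(4,6) by (simp_all add: cox_m_commute)
  have "D_eq n ([c] @ [a, b] @ [c, a]) ([c] @ [b, a] @ [c, a])"
    using D_eq_commute[OF assms(1,2,4)] by (rule D_eq_append_cong)
  also have "D_eq n \<dots> ([c, b] @ [a, c, a] @ [])" by (simp add: D_refl)
  also have "D_eq n \<dots> ([c, b] @ [c, a, c] @ [])"
    using D_eq_braid[OF assms(1,3,5)] by (rule D_eq_append_cong)
  also have "D_eq n \<dots> ([] @ [c, b, c] @ [a, c])" by (simp add: D_refl)
  also have "D_eq n \<dots> ([] @ [b, c, b] @ [a, c])"
    using D_eq_braid[OF assms(3,2) \<open>cox_m c b = 3\<close>] by (rule D_eq_append_cong)
  also have "D_eq n \<dots> ([b, c] @ [b, a] @ [c])" by (simp add: D_refl)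
  also have "D_eq n \<dots> ([b, c] @ [a, b] @ [c])"
    using D_eq_commute[OF assms(2,1) \<open>cox_m b a = 2\<close>] by (rule D_eq_append_cong)
  finally show ?thesis by simp
qed

lemma set_wL: "set (wL L) = {S 1, S'} \<union> S ` {2..L}"
  by (auto simp: wL_def)

lemma wL_Suc: "1 \<le> L \<Longrightarrow> wL (Suc L) = [S (Suc L)] @ wL L @ [S (Suc L)]"
  by (simp add: wL_def)

lemma letter_of_wL_commutes:
  assumes "x \<in> set (wL m)" "1 \<le> m" "m + 2 \<le> j" "j \<le> n - 1"
  shows "D_eq n [S j, x] [x, S j]"
proof (rule D_eq_commute)
  show "valid_gen n (S j)" "valid_gen n x" "cox_m (S j) x = 2"
    using assms by (auto simp: set_wL valid_gen_def)
qed

lemma wL_intertwine_propagate: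
  assumes "D_eq n (wL i @ [a]) ([b] @ wL i)" "a \<in> set (wL (i - 1))" "b \<in> set (wL (i - 1))"
    and "2 \<le> i" "i \<le> L" "L \<le> n - 1"
  shows "D_eq n (wL L @ [a]) ([b] @ wL L)"
  using assms(5,6)
proof (induction L rule: dec_induct)
  case base
  show ?case by (rule assms(1))
next
  case (step L)
  have "D_eq n (([S (Suc L)] @ wL L @ [S (Suc L)]) @ [a]) ([b] @ [S (Suc L)] @ wL L @ [S (Suc L)])"
  proof (rule D_eq_conjugate_intertwine)
    show "D_eq n (wL L @ [a]) ([b] @ wL L)" using step by simp
    show "D_eq n ([S (Suc L)] @ [a]) ([a] @ [S (Suc L)])"
      using letter_of_wL_commutes[OF assms(2)] step assms(4) by simp
    show "D_eq n ([b] @ [S (Suc L)]) ([S (Suc L)] @ [b])"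
      using D_sym[OF letter_of_wL_commutes[OF assms(3)]] step assms(4) by simp
  qed
  then show ?case using wL_Suc step assms(4) by simp
qed

lemma wL_2_intertwines:
  assumes "3 \<le> n"
  shows "D_eq n (wL 2 @ [S 1]) ([S'] @ wL 2)" "D_eq n (wL 2 @ [S']) ([S 1] @ wL 2)"
proof -
  have wL_2: "wL 2 = [S 2, S 1, S', S 2]" by (simp add: wL_def)
  have valid: "valid_gen n (S 1)" "valid_gen n S'" "valid_gen n (S 2)"
    using assms by (auto simp: valid_gen_def)
  show "D_eq n (wL 2 @ [S 1]) ([S'] @ wL 2)"
    using D_eq_intertwine_commuting_pair[OF valid] wL_2 by simp
  have "D_eq n ([S 2] @ [S 1, S'] @ [S 2, S']) ([S 2] @ [S', S 1] @ [S 2, S'])"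
    using D_eq_commute[OF valid(1,2)] by (rule D_eq_append_cong) simp
  also have "D_eq n \<dots> ([S 1] @ [S 2, S', S 1, S 2])"
    using D_eq_intertwine_commuting_pair[OF valid(2,1,3)] by simp
  also have "D_eq n \<dots> ([S 1, S 2] @ [S', S 1] @ [S 2])" by (simp add: D_refl)
  also have "D_eq n \<dots> ([S 1, S 2] @ [S 1, S'] @ [S 2])"
    using D_eq_commute[OF valid(2,1)] by (rule D_eq_append_cong) simp
  finally show "D_eq n (wL 2 @ [S']) ([S 1] @ wL 2)" using wL_2 by simp
qed

lemma wL_Suc_commutes_S:
  assumes "2 \<le> k" "k + 1 \<le> n - 1"
  shows "D_eq n (wL (Suc k) @ [S k]) ([S k] @ wL (Suc k))"
proof -
  have wL_Suc_k: "wL (Suc k) = [S (Suc k), S k] @ wL (k - 1) @ [S k, S (Suc k)]"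
    using assms(1) wL_Suc[of k] wL_Suc[of "k - 1"] by (simp add: Suc_diff_le)
  have "D_eq n (wL (k - 1) @ [S (Suc k)]) ([S (Suc k)] @ wL (k - 1))"
    using assms D_sym[OF letter_of_wL_commutes[of _ "k - 1" "Suc k" n]]
    by (intro D_eq_commute_word) simp
  moreover have "valid_gen n (S k)" "valid_gen n (S (Suc k))"
    using assms by (auto simp: valid_gen_def)
  ultimately show ?thesis
    using D_eq_braid_conjugate_commute[of n "S k" "S (Suc k)"] wL_Suc_k by simp
qed

theorem mainTheorem12:
  fixes n :: nat
  assumes "n \<ge> 2"
  shows "(\<forall>L. 2 \<le> L \<and> L \<le> n - 1 \<longrightarrow> D_eq n (wL L @ [S 1]) ([S'] @ wL L))
       \<and> (\<forall>L. 2 \<le> L \<and> L \<le> n - 1 \<longrightarrow> D_eq n (wL L @ [S']) ([S 1] @ wL L))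
       \<and> (\<forall>L k. 2 \<le> k \<and> k \<le> L - 1 \<and> L \<le> n - 1 \<longrightarrow> D_eq n (wL L @ [S k]) ([S k] @ wL L))"
proof (intro conjI allI impI; elim conjE)
  have letters: "S 1 \<in> set (wL 1)" "S' \<in> set (wL 1)" by (simp_all add: wL_def)
  fix L assume "2 \<le> L" "L \<le> n - 1"
  then show "D_eq n (wL L @ [S 1]) ([S'] @ wL L)" "D_eq n (wL L @ [S']) ([S 1] @ wL L)"
    using wL_intertwine_propagate[OF wL_2_intertwines(1)] wL_intertwine_propagate[OF wL_2_intertwines(2)]
      letters by simp_all
next
  fix L k assume k: "2 \<le> k" "k \<le> L - 1" "L \<le> n - 1"
  have base: "D_eq n (wL (Suc k) @ [S k]) ([S k] @ wL (Suc k))"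
    using k by (intro wL_Suc_commutes_S) auto
  have letter: "S k \<in> set (wL (Suc k - 1))" using k by (simp add: set_wL)
  show "D_eq n (wL L @ [S k]) ([S k] @ wL L)"
    by (rule wL_intertwine_propagate[OF base letter letter]) (use k in auto)
qed

end
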